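(* For \(z \in \{ z \in \mathbb{C} : |\arg(z)| < \pi \}\) and \(n \in \mathbb{N}\), \[ {}_1F_1\left(\begin{matrix} 1 \\ z+1 \end{matrix}\,;\, z\right) = 1 + z + \cfrac{-z\cdot z}{(2z+2) + \cfrac{-z(z+1)}{(2z+3) + \cfrac{-z(z+2)}{(2z+4) + \cdots}}}, \] i.e. \(1+z+\mathop{\mathrm{K}}_{m=1}^{\infty}\frac{-z(m+z-1)}{m+2z+1}\), and \[ \int_0^1 (1-t)^{n-1} e^{tn}\, dt = \frac{1}{n}\left(1 + n + \mathop{\mathrm{K}}_{m=1}^{\infty}\frac{-n(m+n-1)}{m+2n+1}\right). \]
   Context: Here \(\mathop{\mathrm{K}}_{m=1}^{\infty}\frac{a_m}{b_m}\) denotes the continued fraction \(\cfrac{a_1}{b_1+\cfrac{a_2}{b_2+\cfrac{a_3}{b_3+\cdots}}}\) with partial numerators \(a_m\) and partial denominators \(b_m\); \({}_1F_1\) is the confluent hypergeometric function. *)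

theory Defs
  imports "HOL-Analysis.Analysis"
begin

definition hyp1F1 :: "complex \<Rightarrow> complex \<Rightarrow> complex \<Rightarrow> complex" where
  "hyp1F1 a b z = (\<Sum>k. pochhammer a k / pochhammer b k * z ^ k / fact k)"

text \<open>Wallis recurrences for the continued fraction K_{m>=1} a_m / b_m (with b_0 = 0):
  A_{-1} = 1, A_0 = 0, B_{-1} = 0, B_0 = 1,
  A_n = b_n A_{n-1} + a_n A_{n-2},  B_n = b_n B_{n-1} + a_n B_{n-2}.
  The n-th convergent is A_n / B_n.\<close>
fun cfA :: "(nat \<Rightarrow> 'a::field) \<Rightarrow> (nat \<Rightarrow> 'a) \<Rightarrow> nat \<Rightarrow> 'a" where
  "cfA a b 0 = 0"
| "cfA a b (Suc 0) = a 1"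
| "cfA a b (Suc (Suc n)) = b (n + 2) * cfA a b (Suc n) + a (n + 2) * cfA a b n"

fun cfB :: "(nat \<Rightarrow> 'a::field) \<Rightarrow> (nat \<Rightarrow> 'a) \<Rightarrow> nat \<Rightarrow> 'a" where
  "cfB a b 0 = 1"
| "cfB a b (Suc 0) = b 1"
| "cfB a b (Suc (Suc n)) = b (n + 2) * cfB a b (Suc n) + a (n + 2) * cfB a b n"

definition cf_converges_to :: "(nat \<Rightarrow> 'a::{field,topological_space}) \<Rightarrow> (nat \<Rightarrow> 'a) \<Rightarrow> 'a \<Rightarrow> bool" where
  "cf_converges_to a b L \<longleftrightarrow>
     (\<forall>\<^sub>F n in sequentially. cfB a b n \<noteq> 0) \<and> ((\<lambda>n. cfA a b n / cfB a b n) \<longlongrightarrow> L) sequentially"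

end

theory Submission
  imports Defs
begin

(* Put t_k = z^k / (z+1)_k, so that 1F1(1; z+1; z) = sum_k t_k, and S_N = sum_{k<N} t_k.
   The Wallis recurrences of the continued fraction are solved in closed form by
   B_n = (n+1) (z+1)_n and A_n = (z+1)_n ((n+1) (S_{n+2} - 1 - z) + z t_{n+1}), so the n-th
   convergent is S_{n+2} - 1 - z + z t_{n+1} / (n+1), which tends to 1F1(1; z+1; z) - 1 - z.
   For J_m = int_0^1 (1-t)^m e^{ct} dt, integration by parts gives (m+1) J_m = 1 + c J_{m+1};
   iterating, (m+1) J_m = sum_k c^k / (m+2)_k, because the remainder after K steps is
   c^K / (m+2)_K times the bounded quantity (m+K+1) J_{m+K}. At m = n-1, c = n this is the
   series above with z = n. *)

abbreviation hyp1F1_cf_num :: "'a::field_char_0 \<Rightarrow> nat \<Rightarrow> 'a" where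
  "hyp1F1_cf_num z \<equiv> \<lambda>m. - z * (of_nat m + z - 1)"

abbreviation hyp1F1_cf_den :: "'a::field_char_0 \<Rightarrow> nat \<Rightarrow> 'a" where
  "hyp1F1_cf_den z \<equiv> \<lambda>m. of_nat m + 2 * z + 1"

lemma power_over_pochhammer_Suc:
  fixes z b :: "'a::field"
  shows "z ^ Suc k / pochhammer b (Suc k) = z ^ k / pochhammer b k * (z / (b + of_nat k))"
  by (simp add: pochhammer_Suc)

lemma summable_power_over_pochhammer:
  fixes z b :: "'a::{real_normed_field,banach}"
  shows "summable (\<lambda>k. z ^ k / pochhammer b k)"
proof (rule summable_ratio_test[where c = "1/2" and N = "nat \<lceil>2 * norm z + norm b\<rceil>"])
  fix k assume "k \<ge> nat \<lceil>2 * norm z + norm b\<rceil>"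
  then have "2 * norm z \<le> real k - norm b" by linarith
  also have "\<dots> \<le> norm (b + of_nat k)"
    using norm_triangle_ineq3[of "of_nat k" "-b"] by (simp add: add.commute)
  finally have "norm z / norm (b + of_nat k) \<le> 1/2"
    by (cases "b + of_nat k = 0") (simp_all add: divide_simps)
  then have "norm (z ^ k / pochhammer b k) * (norm z / norm (b + of_nat k))
      \<le> norm (z ^ k / pochhammer b k) * (1/2)"
    by (rule mult_left_mono) simp
  then show "norm (z ^ Suc k / pochhammer b (Suc k)) \<le> 1/2 * norm (z ^ k / pochhammer b k)"
    unfolding power_over_pochhammer_Suc by (simp add: norm_mult norm_divide mult.commute)
qed simp

lemma hyp1F1_one_eq_suminf:
  "hyp1F1 1 b z = (\<Sum>k. z ^ k / pochhammer b k)"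
  unfolding hyp1F1_def by (simp add: pochhammer_fact[symmetric])

lemma cfB_hyp1F1_cf:
  fixes z :: "'a::field_char_0"
  shows "cfB (hyp1F1_cf_num z) (hyp1F1_cf_den z) n = of_nat (n + 1) * pochhammer (z + 1) n"
  by (induction n rule: induct_nat_012) (simp_all add: pochhammer_Suc algebra_simps)

(* With t1, t2, t3 the terms t_{n+1}, t_{n+2}, t_{n+3} and R = S_{n+2} - 1 - z, this is the
   Wallis recurrence for the bracket in cfA_hyp1F1_cf, divided by (z+1)_{n+1}. *)
lemma hyp1F1_cf_step_identity:
  fixes z m R t1 t2 t3 :: "'a::comm_ring_1"
  assumes "(z + m + 2) * t2 = z * t1" and "(z + m + 3) * t3 = z * t2"
  shows "(z + m + 2) * ((m + 3) * (R + t2 + t3) + z * t3)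
    = (m + 2 * z + 3) * ((m + 2) * (R + t2) + z * t2) - z * ((m + 1) * R + z * t1)"
proof -
  have "(z + m + 2) * ((m + 3) * (R + t2 + t3) + z * t3)
      - ((m + 2 * z + 3) * ((m + 2) * (R + t2) + z * t2) - z * ((m + 1) * R + z * t1))
    = (z + m + 2) * ((z + m + 3) * t3 - z * t2) - z * ((z + m + 2) * t2 - z * t1)"
    by (simp add: algebra_simps)
  with assms show ?thesis by simp
qed

lemma cfA_hyp1F1_cf:
  fixes z :: "'a::field_char_0"
  assumes nz: "\<And>j. z + of_nat (Suc j) \<noteq> 0"
  shows "cfA (hyp1F1_cf_num z) (hyp1F1_cf_den z) n = pochhammer (z + 1) n *
    (of_nat (n + 1) * ((\<Sum>k<n + 2. z ^ k / pochhammer (z + 1) k) - 1 - z)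
     + z ^ (n + 2) / pochhammer (z + 1) (n + 1))"
proof (induction n rule: induct_nat_012)
  case 0
  have "z + 1 \<noteq> 0" using nz[of 0] by (simp add: add.commute)
  then show ?case by (simp add: eval_nat_numeral field_simps)
next
  case 1
  have "z + 1 \<noteq> 0" "z + 2 \<noteq> 0" using nz[of 0] nz[of 1] by (simp_all add: add.commute)
  then show ?case
    by (simp add: eval_nat_numeral pochhammer_Suc divide_simps) (simp add: algebra_simps)
next
  case (ge2 n)
  define t where "t k = z ^ k / pochhammer (z + 1) k" for k
  define P where "P = pochhammer (z + 1) n"
  define R where "R = (\<Sum>k<n + 2. t k) - 1 - z"
  define m :: 'a where "m = of_nat n"
  have t_Suc: "(z + of_nat (Suc k)) * t (Suc k) = z * t k" for k
    using nz[of k] unfolding t_def power_over_pochhammer_Suc by (simp add: add_ac)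
  have t_closed: "z ^ (k + 2) / pochhammer (z + 1) (k + 1) = z * t (k + 1)" for k
    unfolding t_def by simp
  have P1: "pochhammer (z + 1) (Suc n) = P * (z + m + 1)"
    unfolding P_def m_def by (simp add: pochhammer_Suc add_ac)
  have P2: "pochhammer (z + 1) (Suc (Suc n)) = P * (z + m + 1) * (z + m + 2)"
    unfolding P_def m_def by (simp add: pochhammer_Suc add_ac)
  have IH0: "cfA (hyp1F1_cf_num z) (hyp1F1_cf_den z) n = P * ((m + 1) * R + z * t (n + 1))"
    using ge2.IH(1) unfolding t_closed t_def[symmetric] P_def R_def m_def by simp
  have IH1: "cfA (hyp1F1_cf_num z) (hyp1F1_cf_den z) (Suc n)
      = P * (z + m + 1) * ((m + 2) * (R + t (n + 2)) + z * t (n + 2))"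
    using ge2.IH(2) unfolding t_closed t_def[symmetric] P1 R_def m_def
    by (simp add: eval_nat_numeral add_ac)
  have step: "(z + m + 2) * ((m + 3) * (R + t (n + 2) + t (n + 3)) + z * t (n + 3))
    = (m + 2 * z + 3) * ((m + 2) * (R + t (n + 2)) + z * t (n + 2)) - z * ((m + 1) * R + z * t (n + 1))"
    by (rule hyp1F1_cf_step_identity)
      (use t_Suc[of "n + 1"] t_Suc[of "n + 2"] in \<open>simp_all add: m_def eval_nat_numeral add_ac\<close>)
  have "cfA (hyp1F1_cf_num z) (hyp1F1_cf_den z) (Suc (Suc n))
      = P * (z + m + 1) * ((m + 2 * z + 3) * ((m + 2) * (R + t (n + 2)) + z * t (n + 2))
          - z * ((m + 1) * R + z * t (n + 1)))"
    unfolding cfA.simps IH0 IH1 by (simp add: m_def algebra_simps)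
  also have "\<dots> = P * (z + m + 1) * (z + m + 2) * ((m + 3) * (R + t (n + 2) + t (n + 3)) + z * t (n + 3))"
    unfolding step[symmetric] by (simp add: algebra_simps)
  finally show ?case
    unfolding t_closed t_def[symmetric] P2 R_def m_def by (simp add: eval_nat_numeral add_ac)
qed

lemma pochhammer_add_1_neq_0:
  fixes z :: "'a::field_char_0"
  assumes "\<And>j. z + of_nat (Suc j) \<noteq> 0"
  shows "pochhammer (z + 1) n \<noteq> 0"
proof
  assume "pochhammer (z + 1) n = 0"
  then obtain k where "z + 1 = - of_nat k"
    by (auto simp: pochhammer_eq_0_iff)
  then have "z + of_nat (Suc k) = 0"
    by (simp add: add_eq_0_iff2 add.assoc [symmetric] add.commute [of _ 1])
  with assms show False by blast
qed

lemma cf_converges_to_hyp1F1_cf: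
  fixes z :: "'a::{real_normed_field,banach}"
  assumes nz: "\<And>j. z + of_nat (Suc j) \<noteq> 0"
  shows "cf_converges_to (hyp1F1_cf_num z) (hyp1F1_cf_den z)
    ((\<Sum>k. z ^ k / pochhammer (z + 1) k) - 1 - z)"
proof -
  define t where "t k = z ^ k / pochhammer (z + 1) k" for k
  note poch_nz = pochhammer_add_1_neq_0[OF nz]
  have convergent_eq: "cfA (hyp1F1_cf_num z) (hyp1F1_cf_den z) n / cfB (hyp1F1_cf_num z) (hyp1F1_cf_den z) n
      = ((\<Sum>k<n + 2. t k) - 1 - z) + z * t (n + 1) * (1 / of_nat (n + 1))" for n
    using poch_nz[of n] unfolding cfA_hyp1F1_cf[OF nz] cfB_hyp1F1_cf t_def
    by (simp add: field_simps del: of_nat_Suc)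
  have "summable t"
    unfolding t_def by (rule summable_power_over_pochhammer)
  then have "(\<lambda>n. ((\<Sum>k<n + 2. t k) - 1 - z) + z * t (n + 1) * (1 / of_nat (n + 1)))
      \<longlonglongrightarrow> (suminf t - 1 - z) + z * 0 * 0"
    by (intro tendsto_intros LIMSEQ_ignore_initial_segment summable_LIMSEQ summable_LIMSEQ_zero
        lim_1_over_n)
  moreover have "cfB (hyp1F1_cf_num z) (hyp1F1_cf_den z) n \<noteq> 0" for n
    unfolding cfB_hyp1F1_cf using poch_nz[of n] by (simp del: of_nat_Suc)
  ultimately show ?thesis
    unfolding cf_converges_to_def convergent_eq t_def by simp
qed

lemma integral_power_exp_rec:
  fixes c :: real
  shows "real (Suc m) * integral {0..1} (\<lambda>t. (1 - t) ^ m * exp (t * c))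
    = 1 + c * integral {0..1} (\<lambda>t. (1 - t) ^ Suc m * exp (t * c))"
proof -
  define f where "f t = real (Suc m) * ((1 - t) ^ m * exp (t * c)) - c * ((1 - t) ^ Suc m * exp (t * c))"
    for t :: real
  have "((\<lambda>t. - ((1 - t) ^ Suc m * exp (t * c))) has_real_derivative f t) (at t within {0..1})" for t
    unfolding f_def
    by (auto intro!: derivative_eq_intros simp del: of_nat_Suc power_Suc simp: algebra_simps)
  then have "(f has_integral 1) {0..1}"
    using fundamental_theorem_of_calculus[of 0 1 "\<lambda>t. - ((1 - t) ^ Suc m * exp (t * c))" f]
    by (simp add: has_real_derivative_iff_has_vector_derivative)
  moreover have "integral {0..1} f = real (Suc m) * integral {0..1} (\<lambda>t. (1 - t) ^ m * exp (t * c))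
      - c * integral {0..1} (\<lambda>t. (1 - t) ^ Suc m * exp (t * c))"
    unfolding f_def
    by (subst integral_diff) (auto intro!: integrable_continuous_interval continuous_intros
        simp del: of_nat_Suc power_Suc)
  ultimately show ?thesis
    by (simp add: integral_unique)
qed

lemma abs_integral_power_exp_le:
  fixes c :: real
  shows "\<bar>integral {0..1} (\<lambda>t. (1 - t) ^ m * exp (t * c))\<bar> \<le> exp \<bar>c\<bar>"
proof -
  have "\<bar>(1 - t) ^ m * exp (t * c)\<bar> \<le> exp \<bar>c\<bar>" if "t \<in> {0..1}" for t
  proof -
    have "\<bar>(1 - t) ^ m\<bar> \<le> 1"
      using that by (simp add: power_le_one)
    moreover have "t * c \<le> t * \<bar>c\<bar>" "t * \<bar>c\<bar> \<le> \<bar>c\<bar>"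
      using that by (simp_all add: mult_left_mono mult_left_le_one_le)
    ultimately have "\<bar>(1 - t) ^ m\<bar> * exp (t * c) \<le> 1 * exp \<bar>c\<bar>"
      by (intro mult_mono) auto
    then show ?thesis
      by (simp add: abs_mult)
  qed
  then have "norm (integral {0..1} (\<lambda>t. (1 - t) ^ m * exp (t * c))) \<le> exp \<bar>c\<bar> * (1 - 0)"
    by (intro integral_bound continuous_intros) auto
  then show ?thesis
    by simp
qed

lemma abs_integral_power_exp_scaled_le:
  fixes c :: real
  shows "\<bar>real (Suc m) * integral {0..1} (\<lambda>t. (1 - t) ^ m * exp (t * c))\<bar> \<le> 1 + \<bar>c\<bar> * exp \<bar>c\<bar>"
proof -
  have "\<bar>real (Suc m) * integral {0..1} (\<lambda>t. (1 - t) ^ m * exp (t * c))\<bar>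
      \<le> 1 + \<bar>c\<bar> * \<bar>integral {0..1} (\<lambda>t. (1 - t) ^ Suc m * exp (t * c))\<bar>"
    unfolding integral_power_exp_rec by (simp add: abs_mult abs_triangle_ineq [THEN order_trans])
  also have "\<dots> \<le> 1 + \<bar>c\<bar> * exp \<bar>c\<bar>"
    by (intro add_left_mono mult_left_mono abs_integral_power_exp_le) simp
  finally show ?thesis .
qed

lemma integral_power_exp_eq_suminf:
  fixes c :: real
  shows "real (Suc m) * integral {0..1} (\<lambda>t. (1 - t) ^ m * exp (t * c))
    = (\<Sum>k. c ^ k / pochhammer (real m + 2) k)"
proof -
  define I where "I j = real (Suc j) * integral {0..1} (\<lambda>t. (1 - t) ^ j * exp (t * c))" for j
  define u where "u k = c ^ k / pochhammer (real m + 2) k" for k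
  have I_rec: "I j = 1 + c / (real j + 2) * I (Suc j)" for j
    using integral_power_exp_rec[of j c] by (simp add: I_def add.commute)
  have I_bound: "\<bar>I j\<bar> \<le> 1 + \<bar>c\<bar> * exp \<bar>c\<bar>" for j
    unfolding I_def by (rule abs_integral_power_exp_scaled_le)
  have telescope: "I m = (\<Sum>k<K. u k) + u K * I (m + K)" for K
  proof (induction K)
    case 0
    then show ?case by (simp add: u_def)
  next
    case (Suc K)
    have "u K * I (m + K) = u K + u (Suc K) * I (m + Suc K)"
      using I_rec[of "m + K"] unfolding u_def power_over_pochhammer_Suc
      by (simp add: algebra_simps)
    with Suc.IH show ?case by simp
  qed
  have "summable u"
    unfolding u_def by (rule summable_power_over_pochhammer)
  have "(\<lambda>K. u K * I (m + K)) \<longlonglongrightarrow> 0"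
  proof (rule Lim_null_comparison)
    show "\<forall>\<^sub>F K in sequentially. norm (u K * I (m + K)) \<le> norm (u K) * (1 + \<bar>c\<bar> * exp \<bar>c\<bar>)"
      using I_bound by (simp add: abs_mult mult_left_mono)
    show "(\<lambda>K. norm (u K) * (1 + \<bar>c\<bar> * exp \<bar>c\<bar>)) \<longlonglongrightarrow> 0"
      by (rule tendsto_mult_left_zero) (intro tendsto_norm_zero summable_LIMSEQ_zero \<open>summable u\<close>)
  qed
  with \<open>summable u\<close> have "(\<lambda>K. (\<Sum>k<K. u k) + u K * I (m + K)) \<longlonglongrightarrow> suminf u + 0"
    by (intro tendsto_add summable_LIMSEQ)
  then have "(\<lambda>K. I m) \<longlonglongrightarrow> suminf u"
    unfolding telescope [symmetric] by simp
  then show ?thesis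
    unfolding I_def u_def by (simp add: LIMSEQ_const_iff)
qed

lemma Arg_less_pi_add_Suc_neq_0:
  fixes z :: complex
  assumes "\<bar>Arg z\<bar> < pi"
  shows "z + of_nat (Suc j) \<noteq> 0"
proof
  assume "z + of_nat (Suc j) = 0"
  then have "z = of_real (- real (Suc j))"
    by (simp add: add_eq_0_iff2)
  then have "Arg z = pi"
    using Arg_of_real[of "- real (Suc j)"] by simp
  with assms show False
    by simp
qed

theorem corollary3p2:
  fixes z :: complex and n :: nat
  assumes "z \<noteq> 0" and "\<bar>Arg z\<bar> < pi" and "n \<ge> 1"
  shows "(\<exists>L. cf_converges_to (\<lambda>m. - z * (of_nat m + z - 1)) (\<lambda>m. of_nat m + 2 * z + 1) L
              \<and> hyp1F1 1 (z + 1) z = 1 + z + L)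
       \<and> (\<exists>L. cf_converges_to (\<lambda>m. - real n * (real m + real n - 1)) (\<lambda>m. real m + 2 * real n + 1) L
              \<and> integral {0..1} (\<lambda>t::real. (1 - t) ^ (n - 1) * exp (t * real n))
                  = (1 + real n + L) / real n)"
proof (intro conjI exI)
  show "cf_converges_to (hyp1F1_cf_num z) (hyp1F1_cf_den z) ((\<Sum>k. z ^ k / pochhammer (z + 1) k) - 1 - z)"
    using Arg_less_pi_add_Suc_neq_0[OF assms(2)] by (rule cf_converges_to_hyp1F1_cf)
  show "hyp1F1 1 (z + 1) z = 1 + z + ((\<Sum>k. z ^ k / pochhammer (z + 1) k) - 1 - z)"
    by (simp add: hyp1F1_one_eq_suminf)
  show "cf_converges_to (hyp1F1_cf_num (real n)) (hyp1F1_cf_den (real n))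
      ((\<Sum>k. real n ^ k / pochhammer (real n + 1) k) - 1 - real n)"
    by (rule cf_converges_to_hyp1F1_cf) (simp del: of_nat_Suc)
  have "real n * integral {0..1} (\<lambda>t. (1 - t) ^ (n - 1) * exp (t * real n))
      = (\<Sum>k. real n ^ k / pochhammer (real n + 1) k)"
    using integral_power_exp_eq_suminf[of "n - 1" "real n"] assms(3) by (simp add: of_nat_diff add.commute)
  with assms(3) show "integral {0..1} (\<lambda>t. (1 - t) ^ (n - 1) * exp (t * real n))
      = (1 + real n + ((\<Sum>k. real n ^ k / pochhammer (real n + 1) k) - 1 - real n)) / real n"
    by (simp add: field_simps)
qed

end
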